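(* For every dependency DAG $G$ in which every item has at most $k-1$ dependencies and every cache size $k\ge1$, the deterministic online algorithm Recursive LRU (described in the context) is $k$-competitive for online dependency-aware caching without bypassing, i.e., there is a constant $\alpha$ such that for every request sequence $\sigma$, its cost on $\sigma$ is at most $k\cdot\mathrm{OPT}(\sigma)+\alpha$.
   Context: Model: universe $\mathcal{U}$, DAG $G=(\mathcal{U},E)$, $T(x)$ = set of items reachable from $x$ in $G$ including $x$; each item has at most $k-1$ dependencies. A cache of at most $k$ items is feasible if it contains $T(x)$ for every cached $x$. Upon a request to $v$, the algorithm must make $T(v)$ cached by single-item fetches/evictions keeping the cache feasible after each operation; cost = number of fetches. All algorithms start from the same feasible initial cache; $\mathrm{OPT}(\sigma)$ is the optimal offline cost. $\tau$ is a fixed total order on $\mathcal{U}$ with $v<_\tau u$ whenever $v\in T(u)$, $v\neq u$. Algorithm Recursive LRU: it keeps a timestamp for each item, drawn from a strictly increasing global clock. On a request to $v$: first, for each $w\in T(v)$ in decreasing $\tau$-order (top to bottom), assign $w$ the next timestamp (so every item of $T(v)$ gets a more recent timestamp than before, and descendants get more recent timestamps than their ancestors within $T(v)$). Second, for each $w\in T(v)$ in increasing $\tau$-order (bottom to top), if $w$ is not cached: if the cache holds $k$ items, evict the cached item with the least recent timestamp; then fetch $w$. This is the classic LRU rule applied to all items of $T(v)$. *)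

theory Defs
  imports Complex_Main
begin

text \<open>An edge (x, y) in E means that item x directly depends on item y.
  T E x is the set of items reachable from x (including x).\<close>

definition T :: "('a \<times> 'a) set \<Rightarrow> 'a \<Rightarrow> 'a set" where
  "T E x = {y. (x, y) \<in> E\<^sup>*}"

definition feasible :: "('a \<times> 'a) set \<Rightarrow> nat \<Rightarrow> 'a set \<Rightarrow> bool" where
  "feasible E k C \<longleftrightarrow> finite C \<and> card C \<le> k \<and> (\<forall>x\<in>C. T E x \<subseteq> C)"

datatype 'a op = Fetch 'a | Evict 'a

fun apply_op :: "'a op \<Rightarrow> 'a set \<Rightarrow> 'a set" where
  "apply_op (Fetch x) C = insert x C"
| "apply_op (Evict x) C = C - {x}"

fun op_cost :: "'a op \<Rightarrow> nat" where
  "op_cost (Fetch x) = 1"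
| "op_cost (Evict x) = 0"

fun ops_ok :: "('a \<times> 'a) set \<Rightarrow> nat \<Rightarrow> 'a set \<Rightarrow> 'a op list \<Rightarrow> bool" where
  "ops_ok E k C [] = True"
| "ops_ok E k C (p # ps) = (feasible E k (apply_op p C) \<and> ops_ok E k (apply_op p C) ps)"

definition run_ops :: "'a set \<Rightarrow> 'a op list \<Rightarrow> 'a set" where
  "run_ops C ps = fold apply_op ps C"

text \<open>A schedule serves the request sequence: one block of operations per request,
  after which the requested item together with all its dependencies is cached.\<close>
fun serves :: "('a \<times> 'a) set \<Rightarrow> nat \<Rightarrow> 'a set \<Rightarrow> 'a list \<Rightarrow> 'a op list list \<Rightarrow> bool" where
  "serves E k C [] [] = True"
| "serves E k C (v # vs) (ps # pss) =
     (ops_ok E k C ps \<and> T E v \<subseteq> run_ops C ps \<and> serves E k (run_ops C ps) vs pss)"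
| "serves E k C _ _ = False"

definition sched_cost :: "'a op list list \<Rightarrow> nat" where
  "sched_cost pss = (\<Sum>ps\<leftarrow>pss. \<Sum>p\<leftarrow>ps. op_cost p)"

definition OPT :: "('a \<times> 'a) set \<Rightarrow> nat \<Rightarrow> 'a set \<Rightarrow> 'a list \<Rightarrow> nat" where
  "OPT E k C0 \<sigma> = Inf {sched_cost pss | pss. serves E k C0 \<sigma> pss}"

definition strict_total :: "('a \<Rightarrow> 'a \<Rightarrow> bool) \<Rightarrow> bool" where
  "strict_total r \<longleftrightarrow> (\<forall>x. \<not> r x x) \<and> (\<forall>x y z. r x y \<longrightarrow> r y z \<longrightarrow> r x z)
     \<and> (\<forall>x y. x \<noteq> y \<longrightarrow> r x y \<or> r y x)"

text \<open>The items of T(v) listed in increasing tau-order (tau x y means x <_tau y).\<close>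
definition tau_list :: "('a \<times> 'a) set \<Rightarrow> ('a \<Rightarrow> 'a \<Rightarrow> bool) \<Rightarrow> 'a \<Rightarrow> 'a list" where
  "tau_list E tau v = (THE xs. distinct xs \<and> set xs = T E v \<and> sorted_wrt tau xs)"

record 'a lru_state =
  cache :: "'a set"
  stamp :: "'a \<Rightarrow> nat"
  clock :: nat
  cost  :: nat

text \<open>Phase 1: assign fresh timestamps to the items of T(v), top to bottom
  (decreasing tau-order).\<close>
definition stamp_item :: "'a \<Rightarrow> 'a lru_state \<Rightarrow> 'a lru_state" where
  "stamp_item w s = s\<lparr>stamp := (stamp s)(w := clock s), clock := Suc (clock s)\<rparr>"

definition fetch_item :: "nat \<Rightarrow> 'a \<Rightarrow> 'a lru_state \<Rightarrow> 'a lru_state" where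
  "fetch_item k w s =
     (if w \<in> cache s then s
      else let C = (if card (cache s) \<ge> k
                    then cache s - {arg_min (stamp s) (\<lambda>x. x \<in> cache s)}
                    else cache s)
           in s\<lparr>cache := insert w C, cost := Suc (cost s)\<rparr>)"

definition lru_request :: "('a \<times> 'a) set \<Rightarrow> nat \<Rightarrow> ('a \<Rightarrow> 'a \<Rightarrow> bool) \<Rightarrow> 'a \<Rightarrow>
    'a lru_state \<Rightarrow> 'a lru_state" where
  "lru_request E k tau v s =
     (let xs = tau_list E tau v;
          s1 = fold stamp_item (rev xs) s
      in fold (fetch_item k) xs s1)"

definition lru_run :: "('a \<times> 'a) set \<Rightarrow> nat \<Rightarrow> ('a \<Rightarrow> 'a \<Rightarrow> bool) \<Rightarrow> 'a list \<Rightarrow>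
    'a lru_state \<Rightarrow> 'a lru_state" where
  "lru_run E k tau \<sigma> s = fold (lru_request E k tau) \<sigma> s"

definition lru_cost :: "('a \<times> 'a) set \<Rightarrow> nat \<Rightarrow> ('a \<Rightarrow> 'a \<Rightarrow> bool) \<Rightarrow> 'a set \<Rightarrow>
    ('a \<Rightarrow> nat) \<Rightarrow> nat \<Rightarrow> 'a list \<Rightarrow> nat" where
  "lru_cost E k tau C0 ts0 c0 \<sigma> =
     cost (lru_run E k tau \<sigma> \<lparr>cache = C0, stamp = ts0, clock = c0, cost = 0\<rparr>)"

end

theory Submission imports Defs begin

text \<open>Cut the request sequence greedily into phases, each phase being a maximal block of
  requests whose dependency closures together contain at most \<open>k\<close> items. Within a phase
  Recursive LRU never evicts an item stamped during that phase (otherwise all cached items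
  would have been requested in the phase, which would then touch more than \<open>k\<close> items),
  so it fetches every item of the phase at most once and pays at most \<open>k\<close>. Conversely,
  a phase together with the first request of the next one touches more than \<open>k\<close> items,
  so any schedule must fetch at least once while serving them, apart from the very first
  request. Hence Recursive LRU pays at most \<open>k\<close> per fetch of any schedule, plus \<open>k\<close>.\<close>

lemma strict_total_irrefl: "strict_total r \<Longrightarrow> \<not> r x x"
  by (simp add: strict_total_def)

lemma strict_total_trans: "strict_total r \<Longrightarrow> r x y \<Longrightarrow> r y z \<Longrightarrow> r x z"
  unfolding strict_total_def by blast

lemma strict_total_total: "strict_total r \<Longrightarrow> x \<noteq> y \<Longrightarrow> r x y \<or> r y x"
  unfolding strict_total_def by blast

lemma strict_total_asym: "strict_total r \<Longrightarrow> r x y \<Longrightarrow> \<not> r y x"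
  using strict_total_irrefl strict_total_trans by metis

lemma strict_total_converse: "strict_total r \<Longrightarrow> strict_total (\<lambda>x y. r y x)"
  unfolding strict_total_def by blast

lemma strict_total_ex_min:
  assumes "strict_total r" "finite S" "S \<noteq> {}"
  shows "\<exists>x\<in>S. \<forall>y\<in>S. \<not> r y x"
  using assms(2,3)
proof (induction S rule: finite_ne_induct)
  case (singleton x)
  show ?case using strict_total_irrefl[OF assms(1)] by auto
next
  case (insert x F)
  then obtain m where m: "m \<in> F" "\<forall>y\<in>F. \<not> r y m" by blast
  show ?case
  proof (cases "r x m")
    case True
    then show ?thesis
      using m strict_total_trans[OF assms(1)] strict_total_irrefl[OF assms(1)] by blast
  next
    case False
    then show ?thesis using m by blast
  qed
qed

lemma sorted_wrt_strict_total_unique: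
  assumes "strict_total r"
  shows "sorted_wrt r xs \<Longrightarrow> sorted_wrt r ys \<Longrightarrow> set xs = set ys \<Longrightarrow> xs = ys"
proof (induction xs arbitrary: ys)
  case Nil
  then show ?case by simp
next
  case (Cons x xs)
  then obtain y ys' where ys: "ys = y # ys'" by (cases ys) auto
  have "x = y"
  proof (rule ccontr)
    assume "x \<noteq> y"
    then have "r y x" "r x y" using Cons.prems ys by auto
    then show False using strict_total_asym[OF assms] by blast
  qed
  moreover have "x \<notin> set xs" "x \<notin> set ys'"
    using Cons.prems ys \<open>x = y\<close> strict_total_irrefl[OF assms] by auto
  then have "set xs = set ys'" using Cons.prems ys \<open>x = y\<close> by (simp add: insert_ident)
  ultimately show ?case using Cons ys by simp
qed

lemma sorted_wrt_strict_total_ex: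
  assumes "strict_total r" "finite S"
  shows "\<exists>xs. distinct xs \<and> set xs = S \<and> sorted_wrt r xs"
  using assms(2)
proof (induction S rule: finite_induct)
  case empty
  then show ?case by simp
next
  case (insert x F)
  then obtain xs where xs: "distinct xs" "set xs = F" "sorted_wrt r xs" by blast
  let ?ys = "filter (\<lambda>y. r y x) xs @ x # filter (\<lambda>y. r x y) xs"
  have "set ?ys = insert x F"
    using xs strict_total_total[OF assms(1), of _ x] by auto
  moreover have "distinct ?ys"
    using xs strict_total_asym[OF assms(1)] strict_total_irrefl[OF assms(1)] by auto
  moreover have "sorted_wrt r ?ys"
    using xs strict_total_trans[OF assms(1)] by (auto simp: sorted_wrt_append sorted_wrt_filter)
  ultimately show ?case by blast
qed

lemma set_tau_list:
  assumes "strict_total tau" "finite (T E v)"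
  shows "set (tau_list E tau v) = T E v"
proof -
  obtain xs where "distinct xs \<and> set xs = T E v \<and> sorted_wrt tau xs"
    using sorted_wrt_strict_total_ex[OF assms] by blast
  then have "\<exists>!xs. distinct xs \<and> set xs = T E v \<and> sorted_wrt tau xs"
    using sorted_wrt_strict_total_unique[OF assms(1)] by (intro ex1I[of _ xs]) auto
  then have "distinct (tau_list E tau v) \<and> set (tau_list E tau v) = T E v
      \<and> sorted_wrt tau (tau_list E tau v)"
    unfolding tau_list_def by (rule theI')
  then show ?thesis by blast
qed

lemma T_self: "x \<in> T E x"
  by (simp add: T_def)

lemma T_trans: "y \<in> T E x \<Longrightarrow> T E y \<subseteq> T E x"
  unfolding T_def by (auto intro: rtrancl_trans)

lemma feasible_T:
  "finite (T E v) \<Longrightarrow> card (T E v) \<le> k \<Longrightarrow> feasible E k (T E v)"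
  by (auto simp: feasible_def dest: T_trans)

definition requested :: "('a \<times> 'a) set \<Rightarrow> 'a list \<Rightarrow> 'a set" where
  "requested E \<sigma> = (\<Union>v\<in>set \<sigma>. T E v)"

lemma finite_requested: "\<forall>x. finite (T E x) \<Longrightarrow> finite (requested E \<sigma>)"
  by (simp add: requested_def)

lemma ex_overflow_prefix:
  "k < card (requested E \<sigma>) \<Longrightarrow>
   \<exists>P r rest. \<sigma> = P @ r # rest \<and> card (requested E P) \<le> k \<and> k < card (requested E (P @ [r]))"
proof (induction \<sigma> rule: rev_induct)
  case Nil
  then show ?case by (simp add: requested_def)
next
  case (snoc x \<sigma>)
  show ?case
  proof (cases "k < card (requested E \<sigma>)")
    case True
    then obtain P r rest where "\<sigma> = P @ r # rest" "card (requested E P) \<le> k"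
        "k < card (requested E (P @ [r]))"
      using snoc.IH by blast
    then show ?thesis by (intro exI[of _ P] exI[of _ r] exI[of _ "rest @ [x]"]) simp
  next
    case False
    then show ?thesis using snoc.prems by (intro exI[of _ \<sigma>] exI[of _ x] exI[of _ "[]"]) simp
  qed
qed

section \<open>Recursive LRU within a phase\<close>

lemma cache_fold_stamp_item [simp]: "cache (fold stamp_item ys s) = cache s"
  by (induction ys arbitrary: s) (simp_all add: stamp_item_def)

lemma cost_fold_stamp_item [simp]: "cost (fold stamp_item ys s) = cost s"
  by (induction ys arbitrary: s) (simp_all add: stamp_item_def)

lemma clock_fold_stamp_item [simp]: "clock (fold stamp_item ys s) = clock s + length ys"
  by (induction ys arbitrary: s) (simp_all add: stamp_item_def)

lemma stamp_fold_stamp_item_notin: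
  "x \<notin> set ys \<Longrightarrow> stamp (fold stamp_item ys s) x = stamp s x"
  by (induction ys arbitrary: s) (simp_all add: stamp_item_def)

lemma stamp_fold_stamp_item_in:
  "x \<in> set ys \<Longrightarrow>
   clock s \<le> stamp (fold stamp_item ys s) x \<and> stamp (fold stamp_item ys s) x < clock s + length ys"
proof (induction ys arbitrary: s)
  case Nil
  then show ?case by simp
next
  case (Cons y ys)
  show ?case
  proof (cases "x \<in> set ys")
    case True
    then show ?thesis using Cons.IH[of "stamp_item y s"] by (simp add: stamp_item_def)
  next
    case False
    with Cons.prems have "x = y" by simp
    have "stamp (fold stamp_item ys (stamp_item y s)) x = clock s"
      using stamp_fold_stamp_item_notin[OF False] \<open>x = y\<close> by (simp add: stamp_item_def)
    then show ?thesis by simp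
  qed
qed

lemma stamp_fetch_item [simp]: "stamp (fetch_item k w s) = stamp s"
  and clock_fetch_item [simp]: "clock (fetch_item k w s) = clock s"
  by (simp_all add: fetch_item_def Let_def)

definition lru_wf :: "nat \<Rightarrow> 'a lru_state \<Rightarrow> bool" where
  "lru_wf k s \<longleftrightarrow> finite (cache s) \<and> card (cache s) \<le> k \<and> (\<forall>x\<in>cache s. stamp s x < clock s)"

text \<open>The invariant of a phase that started at clock \<open>c\<close> with cost \<open>c0\<close> and requests only items
  of \<open>U\<close>: the items stamped during the phase are in \<open>U\<close>, and every fetch so far added one of
  them to the cache.\<close>

definition lru_phase_inv ::
    "nat \<Rightarrow> 'a set \<Rightarrow> nat \<Rightarrow> nat \<Rightarrow> 'a lru_state \<Rightarrow> bool" where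
  "lru_phase_inv k U c c0 s \<longleftrightarrow> lru_wf k s \<and> c \<le> clock s
     \<and> (\<forall>x\<in>cache s. c \<le> stamp s x \<longrightarrow> x \<in> U)
     \<and> cost s \<le> c0 + card {x\<in>cache s. c \<le> stamp s x}"

lemma fetch_item_phase_inv:
  assumes inv: "lru_phase_inv k U c c0 s"
    and w: "w \<in> U" "c \<le> stamp s w" "stamp s w < clock s"
    and U: "finite U" "card U \<le> k" and k: "1 \<le> k"
  shows "lru_phase_inv k U c c0 (fetch_item k w s)"
proof (cases "w \<in> cache s")
  case True
  then show ?thesis using inv by (simp add: fetch_item_def)
next
  case False
  have fin: "finite (cache s)" "card (cache s) \<le> k"
    using inv by (auto simp: lru_phase_inv_def lru_wf_def)
  define a where "a = arg_min (stamp s) (\<lambda>x. x \<in> cache s)"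
  have a_old: "a \<in> cache s" "stamp s a < c" if full: "k \<le> card (cache s)"
  proof -
    obtain z where "z \<in> cache s" using full k by fastforce
    then have a: "a \<in> cache s" "\<forall>x\<in>cache s. stamp s a \<le> stamp s x"
      unfolding a_def using arg_min_nat_lemma[where P = "\<lambda>x. x \<in> cache s" and m = "stamp s"]
      by blast+
    have "\<not> c \<le> stamp s a"
    proof
      assume "c \<le> stamp s a"
      then have "insert w (cache s) \<subseteq> U" using a inv w by (force simp: lru_phase_inv_def)
      then have "card (insert w (cache s)) \<le> card U" using U by (simp add: card_mono)
      then show False using \<open>w \<notin> cache s\<close> fin full U by simp
    qed
    with a show "a \<in> cache s" "stamp s a < c" by simp_all
  qed
  define C where "C = (if k \<le> card (cache s) then cache s - {a} else cache s)"
  have C: "C \<subseteq> cache s" "{x\<in>cache s. c \<le> stamp s x} \<subseteq> C"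
    using a_old by (auto simp: C_def)
  have card_C: "card (insert w C) \<le> k"
    using a_old fin False card_gt_0_iff[of "cache s"] by (auto simp: C_def card_insert_if)
  have step: "fetch_item k w s = s\<lparr>cache := insert w C, cost := Suc (cost s)\<rparr>"
    using False by (simp add: fetch_item_def C_def a_def)
  have "{x\<in>insert w C. c \<le> stamp s x} = insert w {x\<in>cache s. c \<le> stamp s x}"
    using C w by auto
  moreover have "card (insert w {x\<in>cache s. c \<le> stamp s x}) = Suc (card {x\<in>cache s. c \<le> stamp s x})"
    using fin False by simp
  ultimately show ?thesis
    using inv C card_C fin w unfolding step by (auto simp: lru_phase_inv_def lru_wf_def finite_subset)
qed

lemma fold_fetch_item_phase_inv:
  assumes "lru_phase_inv k U c c0 s" "\<forall>w\<in>set xs. w \<in> U \<and> c \<le> stamp s w \<and> stamp s w < clock s"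
    and "finite U" "card U \<le> k" "1 \<le> k"
  shows "lru_phase_inv k U c c0 (fold (fetch_item k) xs s)"
  using assms
proof (induction xs arbitrary: s)
  case Nil
  then show ?case by simp
next
  case (Cons x xs)
  then show ?case using fetch_item_phase_inv[of k U c c0 s x] by simp
qed

lemma lru_request_phase_inv:
  assumes inv: "lru_phase_inv k U c c0 s" and tau: "strict_total tau"
    and fin: "finite (T E v)" and TU: "T E v \<subseteq> U"
    and U: "finite U" "card U \<le> k" and k: "1 \<le> k"
  shows "lru_phase_inv k U c c0 (lru_request E k tau v s)"
proof -
  let ?xs = "tau_list E tau v"
  let ?s = "fold stamp_item (rev ?xs) s"
  have xs: "set (rev ?xs) = T E v" using set_tau_list[OF tau fin] by simp
  have c: "c \<le> clock s" using inv by (simp add: lru_phase_inv_def)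
  have new: "clock s \<le> stamp ?s x \<and> stamp ?s x < clock ?s" if "x \<in> T E v" for x
    using stamp_fold_stamp_item_in[of x "rev ?xs" s] that xs by simp
  have old: "stamp ?s x = stamp s x" if "x \<notin> T E v" for x
    using stamp_fold_stamp_item_notin[of x "rev ?xs" s] that xs by simp
  have mono: "{x\<in>cache s. c \<le> stamp s x} \<subseteq> {x\<in>cache ?s. c \<le> stamp ?s x}"
  proof
    fix x assume "x \<in> {x\<in>cache s. c \<le> stamp s x}"
    then show "x \<in> {x\<in>cache ?s. c \<le> stamp ?s x}"
      using new[of x] old[of x] c by (cases "x \<in> T E v") auto
  qed
  have "card {x\<in>cache s. c \<le> stamp s x} \<le> card {x\<in>cache ?s. c \<le> stamp ?s x}"
    using inv by (intro card_mono[OF _ mono]) (simp add: lru_phase_inv_def lru_wf_def)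
  then have "lru_phase_inv k U c c0 ?s"
    using inv new old TU c by (fastforce simp: lru_phase_inv_def lru_wf_def)
  moreover have "\<forall>w\<in>set ?xs. w \<in> U \<and> c \<le> stamp ?s w \<and> stamp ?s w < clock ?s"
    using new xs TU c by fastforce
  ultimately show ?thesis
    using fold_fetch_item_phase_inv[OF _ _ U k] by (simp add: lru_request_def Let_def)
qed

lemma lru_run_phase_inv:
  assumes "strict_total tau" "\<forall>x. finite (T E x)" "\<forall>v\<in>set P. T E v \<subseteq> U"
    and "finite U" "card U \<le> k" "1 \<le> k"
  shows "lru_phase_inv k U c c0 s \<Longrightarrow> lru_phase_inv k U c c0 (lru_run E k tau P s)"
  using assms(3)
proof (induction P arbitrary: s)
  case Nil
  then show ?case by (simp add: lru_run_def)
next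
  case (Cons v P)
  then show ?case
    using lru_request_phase_inv[OF Cons.prems(1) assms(1) _ _ assms(4-6)] assms(2)
    by (simp add: lru_run_def)
qed

lemma lru_run_phase_cost:
  assumes wf: "lru_wf k s" and tau: "strict_total tau" and fin: "\<forall>x. finite (T E x)"
    and small: "card (requested E P) \<le> k" and k: "1 \<le> k"
  shows "lru_wf k (lru_run E k tau P s) \<and> cost (lru_run E k tau P s) \<le> cost s + k"
proof -
  let ?U = "requested E P" and ?s = "lru_run E k tau P s"
  have "\<forall>v\<in>set P. T E v \<subseteq> ?U" by (auto simp: requested_def)
  moreover have "lru_phase_inv k ?U (clock s) (cost s) s"
    using wf by (auto simp: lru_phase_inv_def lru_wf_def)
  ultimately have inv: "lru_phase_inv k ?U (clock s) (cost s) ?s"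
    using lru_run_phase_inv[OF tau fin _ finite_requested[OF fin] small k] by blast
  then have "card {x\<in>cache ?s. clock s \<le> stamp ?s x} \<le> card ?U"
    using finite_requested[OF fin] by (intro card_mono) (auto simp: lru_phase_inv_def)
  then show ?thesis using inv small by (auto simp: lru_phase_inv_def)
qed

lemma lru_run_append: "lru_run E k tau (xs @ ys) s = lru_run E k tau ys (lru_run E k tau xs s)"
  by (simp add: lru_run_def)

section \<open>Schedules\<close>

lemma run_ops_Nil [simp]: "run_ops C [] = C"
  by (simp add: run_ops_def)

lemma run_ops_Cons [simp]: "run_ops C (p # ps) = run_ops (apply_op p C) ps"
  by (simp add: run_ops_def)

lemma sched_cost_Nil [simp]: "sched_cost [] = 0"
  by (simp add: sched_cost_def)

lemma sched_cost_Cons [simp]: "sched_cost (ps # pss) = (\<Sum>p\<leftarrow>ps. op_cost p) + sched_cost pss"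
  by (simp add: sched_cost_def)

lemma sched_cost_append [simp]: "sched_cost (pss @ qss) = sched_cost pss + sched_cost qss"
  by (simp add: sched_cost_def)

lemma feasible_run_ops: "feasible E k C \<Longrightarrow> ops_ok E k C ps \<Longrightarrow> feasible E k (run_ops C ps)"
  by (induction ps arbitrary: C) auto

lemma run_ops_subset_if_free: "(\<Sum>p\<leftarrow>ps. op_cost p) = 0 \<Longrightarrow> run_ops C ps \<subseteq> C"
proof (induction ps arbitrary: C)
  case Nil
  then show ?case by simp
next
  case (Cons p ps)
  then show ?case by (cases p) force+
qed

lemma requested_subset_if_free:
  "serves E k D \<sigma> pss \<Longrightarrow> sched_cost pss = 0 \<Longrightarrow> requested E \<sigma> \<subseteq> D"
proof (induction \<sigma> arbitrary: D pss)
  case Nil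
  then show ?case by (simp add: requested_def)
next
  case (Cons v \<sigma>)
  then obtain ps pss' where pss: "pss = ps # pss'" by (cases pss) auto
  with Cons.prems have free: "(\<Sum>p\<leftarrow>ps. op_cost p) = 0" "sched_cost pss' = 0" by auto
  have "requested E (v # \<sigma>) \<subseteq> run_ops D ps"
    using Cons pss free by (auto simp: requested_def)
  then show ?case using run_ops_subset_if_free[OF free(1), of D] by blast
qed

lemma serves_split:
  "serves E k D (xs @ r # ys) pss \<Longrightarrow> feasible E k D \<Longrightarrow>
   \<exists>pss1 pss2 D'. pss = pss1 @ pss2 \<and> serves E k D (xs @ [r]) pss1 \<and> serves E k D' ys pss2
     \<and> T E r \<subseteq> D' \<and> feasible E k D'"
proof (induction xs arbitrary: D pss)
  case Nil
  then obtain ps pss' where "pss = ps # pss'" by (cases pss) auto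
  then show ?case
    using Nil feasible_run_ops
    by (intro exI[of _ "[ps]"] exI[of _ pss'] exI[of _ "run_ops D ps"]) auto
next
  case (Cons x xs)
  then obtain ps pss' where pss: "pss = ps # pss'" by (cases pss) auto
  have ps: "ops_ok E k D ps" "T E x \<subseteq> run_ops D ps" "serves E k (run_ops D ps) (xs @ r # ys) pss'"
    using Cons.prems pss by auto
  obtain pss1 pss2 D' where "pss' = pss1 @ pss2" "serves E k (run_ops D ps) (xs @ [r]) pss1"
      "serves E k D' ys pss2" "T E r \<subseteq> D'" "feasible E k D'"
    using Cons.IH[OF ps(3) feasible_run_ops[OF Cons.prems(2) ps(1)]] by blast
  then show ?case using ps pss by (intro exI[of _ "ps # pss1"] exI[of _ pss2] exI[of _ D']) auto
qed

lemma evict_all: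
  assumes tau: "strict_total tau" and topo: "\<forall>u v. v \<in> T E u \<and> v \<noteq> u \<longrightarrow> tau v u"
  shows "feasible E k C \<Longrightarrow> \<exists>ps. ops_ok E k C ps \<and> run_ops C ps = {}"
proof (induction "card C" arbitrary: C)
  case 0
  then show ?case by (intro exI[of _ "[]"]) (simp add: feasible_def)
next
  case (Suc n)
  then have "finite C" "C \<noteq> {}" by (auto simp: feasible_def)
  then obtain x where x: "x \<in> C" "\<forall>y\<in>C. \<not> tau x y"
    using strict_total_ex_min[OF strict_total_converse[OF tau]] by blast
  have "T E y \<subseteq> C - {x}" if "y \<in> C - {x}" for y
  proof
    fix z assume z: "z \<in> T E y"
    with that Suc.prems have "z \<in> C" by (auto simp: feasible_def)
    moreover have "z \<noteq> x" \<comment> \<open>no cached item depends on the \<open>tau\<close>-maximal one\<close>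
      using z that x topo by blast
    ultimately show "z \<in> C - {x}" by simp
  qed
  then have "feasible E k (C - {x})"
    using Suc.prems by (auto simp: feasible_def intro: le_trans[OF card_Diff1_le])
  moreover have "n = card (C - {x})" using Suc.hyps(2) \<open>finite C\<close> x by simp
  ultimately obtain ps where "ops_ok E k (C - {x}) ps" "run_ops (C - {x}) ps = {}"
    using Suc.hyps(1) by blast
  then show ?case using \<open>feasible E k (C - {x})\<close> by (intro exI[of _ "Evict x # ps"]) simp
qed

lemma fetch_all:
  assumes tau: "strict_total tau" and topo: "\<forall>u v. v \<in> T E u \<and> v \<noteq> u \<longrightarrow> tau v u"
    and C: "feasible E k C"
  shows "D \<subseteq> C \<Longrightarrow> \<forall>x\<in>D. T E x \<subseteq> D \<Longrightarrow> \<exists>ps. ops_ok E k D ps \<and> run_ops D ps = C"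
proof (induction "card (C - D)" arbitrary: D)
  case 0
  then show ?case using C by (intro exI[of _ "[]"]) (auto simp: feasible_def)
next
  case (Suc n)
  have "finite C" using C by (simp add: feasible_def)
  then have "finite (C - D)" by simp
  moreover have "C - D \<noteq> {}" using Suc.hyps(2) by (metis card.empty nat.distinct(1))
  ultimately obtain x where x: "x \<in> C - D" "\<forall>y\<in>C - D. \<not> tau y x"
    using strict_total_ex_min[OF tau] by blast
  \<comment> \<open>The dependencies of the \<open>tau\<close>-minimal missing item are all cached already.\<close>
  have closed: "\<forall>y\<in>insert x D. T E y \<subseteq> insert x D"
    using Suc.prems x topo C by (fastforce simp: feasible_def)
  have sub: "insert x D \<subseteq> C" using Suc.prems x by auto
  then have "feasible E k (insert x D)"
    using C closed card_mono[OF \<open>finite C\<close> sub] finite_subset[OF sub \<open>finite C\<close>]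
    by (simp add: feasible_def)
  moreover have "n = card (C - insert x D)"
    using Suc.hyps(2) x \<open>finite C\<close> by (simp add: Diff_insert2[symmetric])
  ultimately obtain ps where "ops_ok E k (insert x D) ps" "run_ops (insert x D) ps = C"
    using Suc.hyps(1) sub closed by blast
  then show ?case using \<open>feasible E k (insert x D)\<close> by (intro exI[of _ "Fetch x # ps"]) simp
qed

lemma ex_serves:
  assumes tau: "strict_total tau" and topo: "\<forall>u v. v \<in> T E u \<and> v \<noteq> u \<longrightarrow> tau v u"
    and fin: "\<forall>x. finite (T E x)" and card_T: "\<forall>x. card (T E x) \<le> k"
  shows "feasible E k C \<Longrightarrow> \<exists>pss. serves E k C \<sigma> pss"
proof (induction \<sigma> arbitrary: C)
  case Nil
  then show ?case by (intro exI[of _ "[]"]) simp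
next
  case (Cons v \<sigma>)
  obtain evict where evict: "ops_ok E k C evict" "run_ops C evict = {}"
    using evict_all[OF tau topo Cons.prems] by blast
  obtain fetch where fetch: "ops_ok E k {} fetch" "run_ops {} fetch = T E v"
    using fetch_all[OF tau topo feasible_T[OF fin[rule_format] card_T[rule_format]]] by blast
  let ?ps = "evict @ fetch"
  have ps: "ops_ok E k C ?ps" "run_ops C ?ps = T E v"
    using evict fetch by (induction evict arbitrary: C) auto
  obtain pss where "serves E k (run_ops C ?ps) \<sigma> pss"
    using Cons.IH feasible_run_ops[OF Cons.prems ps(1)] by blast
  then show ?case using ps by (intro exI[of _ "?ps # pss"]) simp
qed

lemma OPT_attained:
  assumes "\<exists>pss. serves E k C \<sigma> pss"
  shows "\<exists>pss. serves E k C \<sigma> pss \<and> sched_cost pss = OPT E k C \<sigma>"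
proof -
  have "OPT E k C \<sigma> \<in> {sched_cost pss | pss. serves E k C \<sigma> pss}"
    unfolding OPT_def using assms by (intro Inf_nat_def1) auto
  then show ?thesis by auto
qed

section \<open>Competitiveness\<close>

text \<open>\<open>pss\<close> serves only the requests after \<open>v\<close>: each phase that overflows is paid for by a
  fetch the schedule makes after the first request of that phase.\<close>

lemma lru_run_Cons_cost_le:
  assumes tau: "strict_total tau" and fin: "\<forall>x. finite (T E x)"
    and card_T: "\<forall>x. card (T E x) \<le> k" and k: "1 \<le> k"
  shows "lru_wf k s \<Longrightarrow> serves E k D \<sigma> pss \<Longrightarrow> feasible E k D \<Longrightarrow> T E v \<subseteq> D \<Longrightarrow>
    cost (lru_run E k tau (v # \<sigma>) s) \<le> cost s + k * sched_cost pss + k"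
proof (induction "length \<sigma>" arbitrary: v \<sigma> s D pss rule: less_induct)
  case less
  show ?case
  proof (cases "card (requested E (v # \<sigma>)) \<le> k")
    case True
    then show ?thesis using lru_run_phase_cost[OF less.prems(1) tau fin True k] by simp
  next
    case False
    then obtain P r rest where split: "v # \<sigma> = P @ r # rest"
      and small: "card (requested E P) \<le> k" and big: "k < card (requested E (P @ [r]))"
      using ex_overflow_prefix by (metis not_le)
    obtain P' where P: "P = v # P'"
      using split big card_T by (cases P) (auto simp: requested_def not_le[symmetric])
    then obtain pss1 pss2 D' where pss: "pss = pss1 @ pss2" "serves E k D (P' @ [r]) pss1"
        "serves E k D' rest pss2" "T E r \<subseteq> D'" "feasible E k D'"
      using serves_split[of E k D P' r rest pss] less.prems split by auto
    have "sched_cost pss1 \<noteq> 0"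
    proof
      assume "sched_cost pss1 = 0"
      then have "requested E (P @ [r]) \<subseteq> D"
        using requested_subset_if_free[OF pss(2)] less.prems(4) P by (auto simp: requested_def)
      then have "card (requested E (P @ [r])) \<le> card D"
        using less.prems(3) by (intro card_mono) (auto simp: feasible_def)
      then show False using big less.prems(3) by (simp add: feasible_def)
    qed
    let ?s = "lru_run E k tau P s"
    have phase: "lru_wf k ?s" "cost ?s \<le> cost s + k"
      using lru_run_phase_cost[OF less.prems(1) tau fin small k] by auto
    have "length rest < length \<sigma>" using split P by simp
    then have rest: "cost (lru_run E k tau (r # rest) ?s) \<le> cost ?s + k * sched_cost pss2 + k"
      using less.hyps phase(1) pss(3-5) by blast
    have "cost (lru_run E k tau (v # \<sigma>) s) = cost (lru_run E k tau (r # rest) ?s)"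
      by (simp add: split lru_run_append)
    also have "\<dots> \<le> cost s + k + k * sched_cost pss2 + k" using rest phase by simp
    also have "\<dots> \<le> cost s + k * sched_cost pss + k"
      using pss(1) \<open>sched_cost pss1 \<noteq> 0\<close> by (simp add: algebra_simps)
    finally show ?thesis .
  qed
qed

lemma lru_run_cost_le:
  assumes "strict_total tau" "\<forall>x. finite (T E x)" "\<forall>x. card (T E x) \<le> k" "1 \<le> k"
    and "lru_wf k s" "serves E k C \<sigma> pss" "feasible E k C"
  shows "cost (lru_run E k tau \<sigma> s) \<le> cost s + k * sched_cost pss + k"
proof (cases \<sigma>)
  case Nil
  then show ?thesis by (simp add: lru_run_def)
next
  case (Cons v \<sigma>')
  with assms(6) obtain ps pss' where ps: "pss = ps # pss'" "ops_ok E k C ps"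
      "T E v \<subseteq> run_ops C ps" "serves E k (run_ops C ps) \<sigma>' pss'"
    by (cases pss) auto
  have "cost (lru_run E k tau \<sigma> s) \<le> cost s + k * sched_cost pss' + k"
    using lru_run_Cons_cost_le[OF assms(1-5) ps(4) feasible_run_ops[OF assms(7) ps(2)] ps(3)] Cons
    by simp
  also have "\<dots> \<le> cost s + k * sched_cost pss + k" by (simp add: ps(1))
  finally show ?thesis .
qed

theorem mainTheorem7:
  fixes E :: "('a \<times> 'a) set" and k :: nat and tau :: "'a \<Rightarrow> 'a \<Rightarrow> bool"
    and C0 :: "'a set" and ts0 :: "'a \<Rightarrow> nat" and c0 :: nat
  assumes dag: "acyclic E"
    and deps: "\<forall>x. finite (T E x) \<and> card (T E x - {x}) \<le> k - 1"
    and k_pos: "k \<ge> 1"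
    and tau_order: "strict_total tau"
    and tau_topo: "\<forall>u v. v \<in> T E u \<and> v \<noteq> u \<longrightarrow> tau v u"
    and init_feasible: "feasible E k C0"
    and init_inj: "inj_on ts0 C0"
    and init_clock: "\<forall>x\<in>C0. ts0 x < c0"
    and init_consistent: "\<forall>x\<in>C0. \<forall>y\<in>T E x. y \<noteq> x \<longrightarrow> ts0 x < ts0 y"
  shows "\<exists>\<alpha>::real. \<forall>\<sigma>::'a list.
           real (lru_cost E k tau C0 ts0 c0 \<sigma>) \<le> real k * real (OPT E k C0 \<sigma>) + \<alpha>"
proof (intro exI allI)
  fix \<sigma> :: "'a list"
  have fin: "\<forall>x. finite (T E x)" using deps by blast
  have card_T: "\<forall>x. card (T E x) \<le> k"
  proof
    fix x
    have "card (T E x - {x}) = card (T E x) - 1" "0 < card (T E x)"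
      using fin T_self[of x E] by (auto simp: card_gt_0_iff)
    moreover have "card (T E x - {x}) \<le> k - 1" using deps by blast
    ultimately show "card (T E x) \<le> k" using k_pos by linarith
  qed
  obtain pss where pss: "serves E k C0 \<sigma> pss" "sched_cost pss = OPT E k C0 \<sigma>"
    using OPT_attained ex_serves[OF tau_order tau_topo fin card_T init_feasible] by blast
  let ?s0 = "\<lparr>cache = C0, stamp = ts0, clock = c0, cost = 0\<rparr>"
  have "lru_wf k ?s0" using init_feasible init_clock by (simp add: lru_wf_def feasible_def)
  from lru_run_cost_le[OF tau_order fin card_T k_pos this pss(1) init_feasible]
  have "lru_cost E k tau C0 ts0 c0 \<sigma> \<le> k * OPT E k C0 \<sigma> + k"
    by (simp add: lru_cost_def pss(2))
  then show "real (lru_cost E k tau C0 ts0 c0 \<sigma>) \<le> real k * real (OPT E k C0 \<sigma>) + real k"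
    by (metis of_nat_add of_nat_le_iff of_nat_mult)
qed

end
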